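(* Let $k\ge 2$ and let $G$ be a finite simple $r$-regular graph admitting a closed neighborhood balanced $k$-coloring $c$ with color classes $V_1,\dots,V_k$. Then for every $i$, $|V_i|=\frac{|V(G)|}{k}$ and $|E(V_i,V_i)|=\frac{(r+1-k)|V(G)|}{2k^2}$, and for all distinct $i,j$, $|E(V_i,V_j)|=\frac{(r+1)|V(G)|}{k^2}$.
   Context: For a vertex $v$, $N[v]=\{v\}\cup\{u : uv\in E(G)\}$. A closed neighborhood balanced $k$-coloring of $G$ is a map $c: V(G)\to\{1,\dots,k\}$ such that for every vertex $v$ the numbers $|\{u\in N[v] : c(u)=i\}|$, $i=1,\dots,k$, are all equal; its color classes are $V_i=c^{-1}(i)$. For $X,Y\subseteq V(G)$, $E(X,Y)$ is the set of edges joining a vertex of $X$ to a vertex of $Y$; $E(X,X)$ is the set of edges with both endpoints in $X$. *)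

theory Defs
  imports Complex_Main
begin

definition simple_graph :: "'a set \<Rightarrow> 'a set set \<Rightarrow> bool" where
  "simple_graph V E \<longleftrightarrow> finite V \<and>
     (\<forall>e\<in>E. \<exists>u v. u \<in> V \<and> v \<in> V \<and> u \<noteq> v \<and> e = {u, v})"

definition closed_nbhd :: "'a set \<Rightarrow> 'a set set \<Rightarrow> 'a \<Rightarrow> 'a set" where
  "closed_nbhd V E v = {v} \<union> {u \<in> V. {u, v} \<in> E}"

definition regular :: "'a set \<Rightarrow> 'a set set \<Rightarrow> nat \<Rightarrow> bool" where
  "regular V E r \<longleftrightarrow> (\<forall>v\<in>V. card {u \<in> V. {u, v} \<in> E} = r)"

definition color_class :: "'a set \<Rightarrow> ('a \<Rightarrow> nat) \<Rightarrow> nat \<Rightarrow> 'a set" where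
  "color_class V c i = {v \<in> V. c v = i}"

definition cnb_coloring :: "'a set \<Rightarrow> 'a set set \<Rightarrow> nat \<Rightarrow> ('a \<Rightarrow> nat) \<Rightarrow> bool" where
  "cnb_coloring V E k c \<longleftrightarrow> (\<forall>v\<in>V. c v \<in> {1..k}) \<and>
     (\<forall>v\<in>V. \<forall>i\<in>{1..k}. \<forall>j\<in>{1..k}.
        card {u \<in> closed_nbhd V E v. c u = i} = card {u \<in> closed_nbhd V E v. c u = j})"

definition edges_between :: "'a set set \<Rightarrow> 'a set \<Rightarrow> 'a set \<Rightarrow> 'a set set" where
  "edges_between E X Y = {e \<in> E. \<exists>x\<in>X. \<exists>y\<in>Y. e = {x, y}}"

end

theory Submission
  imports Defs
begin

text \<open>
  Every closed neighbourhood has r + 1 vertices, of which exactly (r + 1)/k carry each color.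
  Counting the pairs (v, u) with u \<in> N[v] and c u = i in two ways gives
  |V| (r + 1)/k = |V_i| (r + 1). A vertex of V_i has (r + 1)/k - 1 neighbours in V_i
  (it lies in its own closed neighbourhood) and (r + 1)/k neighbours in every other class;
  summing these degrees over V_i counts the edges of E(V_i,V_i) twice and those of
  E(V_i,V_j) once.
\<close>

lemma card_edges_between_disjoint:
  assumes "finite X" "finite Y" "X \<inter> Y = {}"
  shows "card (edges_between E X Y) = (\<Sum>x\<in>X. card {y\<in>Y. {x, y} \<in> E})"
proof -
  define P where "P = Sigma X (\<lambda>x. {y\<in>Y. {x, y} \<in> E})"
  have "edges_between E X Y = (\<lambda>(x, y). {x, y}) ` P"
    unfolding P_def edges_between_def by auto
  moreover have "inj_on (\<lambda>(x, y). {x, y}) P"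
    using assms(3) unfolding P_def by (auto intro!: inj_onI simp: doubleton_eq_iff)
  ultimately have "card (edges_between E X Y) = card P"
    by (simp add: card_image)
  then show ?thesis
    using assms(1,2) unfolding P_def by simp
qed

lemma card_edges_between_self:
  assumes "finite X" and two: "\<forall>e\<in>E. card e = 2"
  shows "2 * card (edges_between E X X) = (\<Sum>x\<in>X. card {y\<in>X. {x, y} \<in> E})"
proof -
  define P where "P = Sigma X (\<lambda>x. {y\<in>X. {x, y} \<in> E})"
  let ?edge = "\<lambda>(x, y). {x, y}"
  have edges: "edges_between E X X = ?edge ` P"
    unfolding P_def edges_between_def by fastforce
  have fibre: "card {p\<in>P. ?edge p = e} = 2" if e: "e \<in> edges_between E X X" for e
  proof -
    obtain x y where xy: "x \<in> X" "y \<in> X" "e = {x, y}" "e \<in> E"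
      using e unfolding edges_between_def by blast
    have "x \<noteq> y"
      using two xy(3,4) by fastforce
    have "{y, x} \<in> E"
      using xy by (simp add: insert_commute)
    have "{p\<in>P. ?edge p = e} = {(x, y), (y, x)}"
      using xy \<open>{y, x} \<in> E\<close> \<open>x \<noteq> y\<close> unfolding P_def by (auto simp: doubleton_eq_iff)
    then show ?thesis
      using \<open>x \<noteq> y\<close> by simp
  qed
  have "finite P"
    using assms(1) unfolding P_def by simp
  then have "card P = (\<Sum>e\<in>edges_between E X X. card {p\<in>P. ?edge p = e})"
    using sum.group[of P "edges_between E X X" ?edge "\<lambda>_. 1::nat"] edges by simp
  also have "\<dots> = 2 * card (edges_between E X X)"
    using fibre by simp
  finally show ?thesis
    using assms(1) unfolding P_def by simp
qed

lemma simple_graph_finite: "simple_graph V E \<Longrightarrow> finite V"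
  unfolding simple_graph_def by blast

lemma simple_graph_card_edge:
  assumes "simple_graph V E" "e \<in> E"
  shows "card e = 2"
  using assms unfolding simple_graph_def by auto

lemma simple_graph_no_loop: "simple_graph V E \<Longrightarrow> {v, v} \<notin> E"
  using simple_graph_card_edge by fastforce

lemma closed_nbhd_subset:
  assumes "v \<in> V"
  shows "closed_nbhd V E v \<subseteq> V"
  using assms unfolding closed_nbhd_def by auto

lemma card_closed_nbhd:
  assumes "simple_graph V E" "regular V E r" "v \<in> V"
  shows "card (closed_nbhd V E v) = r + 1"
proof -
  have "closed_nbhd V E v = insert v {u \<in> V. {u, v} \<in> E}"
    unfolding closed_nbhd_def by auto
  then show ?thesis
    using assms simple_graph_finite[OF assms(1)] simple_graph_no_loop[OF assms(1)]
    unfolding regular_def by simp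
qed

lemma card_color_closed_nbhd:
  assumes "simple_graph V E" "x \<in> V"
  shows "card {u \<in> closed_nbhd V E x. c u = j}
           = card {y \<in> color_class V c j. {x, y} \<in> E} + (if c x = j then 1 else 0)"
proof -
  have "{u \<in> closed_nbhd V E x. c u = j}
          = (if c x = j then insert x else id) {y \<in> color_class V c j. {x, y} \<in> E}"
    using assms(2) unfolding closed_nbhd_def color_class_def by (auto simp: insert_commute)
  then show ?thesis
    using simple_graph_finite[OF assms(1)] simple_graph_no_loop[OF assms(1)]
    unfolding color_class_def by simp
qed

lemma sum_card_color_closed_nbhd:
  assumes "finite V"
  shows "(\<Sum>v\<in>V. card {u \<in> closed_nbhd V E v. c u = i})
           = (\<Sum>u\<in>color_class V c i. card (closed_nbhd V E u))"
proof -
  have "(\<Sum>v\<in>V. card {u \<in> closed_nbhd V E v. c u = i})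
          = (\<Sum>v\<in>V. card {u \<in> V. c u = i \<and> v \<in> closed_nbhd V E u})"
    by (rule sum.cong) (auto simp: closed_nbhd_def insert_commute intro!: arg_cong[where f = card])
  also have "\<dots> = (\<Sum>u\<in>V. card {v \<in> V. c u = i \<and> v \<in> closed_nbhd V E u})"
    using assms by (intro sum_multicount_gen) auto
  also have "\<dots> = (\<Sum>u\<in>V. if c u = i then card (closed_nbhd V E u) else 0)"
    by (rule sum.cong) (auto simp: closed_nbhd_def intro!: arg_cong[where f = card])
  also have "\<dots> = (\<Sum>u\<in>color_class V c i. card (closed_nbhd V E u))"
    using assms unfolding color_class_def by (simp add: sum.If_cases Int_def)
  finally show ?thesis .
qed

lemma cnb_coloring_range: "cnb_coloring V E k c \<Longrightarrow> v \<in> V \<Longrightarrow> c v \<in> {1..k}"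
  unfolding cnb_coloring_def by blast

lemma cnb_coloring_balanced:
  assumes "cnb_coloring V E k c" "v \<in> V" "i \<in> {1..k}" "j \<in> {1..k}"
  shows "card {u \<in> closed_nbhd V E v. c u = i} = card {u \<in> closed_nbhd V E v. c u = j}"
  using assms unfolding cnb_coloring_def by blast

lemma cnb_coloring_card_color:
  assumes "finite V" "cnb_coloring V E k c" "v \<in> V" "i \<in> {1..k}"
  shows "k * card {u \<in> closed_nbhd V E v. c u = i} = card (closed_nbhd V E v)"
proof -
  let ?N = "closed_nbhd V E v"
  have "?N \<subseteq> V"
    using assms(3) by (rule closed_nbhd_subset)
  then have colors: "c ` ?N \<subseteq> {1..k}" and "finite ?N"
    using cnb_coloring_range[OF assms(2)] finite_subset[OF _ assms(1)] by auto
  then have "card ?N = (\<Sum>j\<in>{1..k}. card {u \<in> ?N. c u = j})"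
    using sum.group[OF _ _ colors, of "\<lambda>_. 1::nat"] by simp
  also have "\<dots> = (\<Sum>j\<in>{1..k}. card {u \<in> ?N. c u = i})"
    using cnb_coloring_balanced[OF assms(2,3) _ assms(4)] by (intro sum.cong) auto
  finally show ?thesis
    by simp
qed

context
  fixes V :: "'a set" and E :: "'a set set" and r k :: nat and c :: "'a \<Rightarrow> nat"
  assumes graph: "simple_graph V E"
    and reg: "regular V E r"
    and col: "cnb_coloring V E k c"
begin

lemma card_color_class:
  assumes "i \<in> {1..k}"
  shows "k * card (color_class V c i) = card V"
proof -
  have "card V * (r + 1) = (\<Sum>v\<in>V. k * card {u \<in> closed_nbhd V E v. c u = i})"
    using cnb_coloring_card_color[OF simple_graph_finite[OF graph] col _ assms]
      card_closed_nbhd[OF graph reg]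
    by simp
  also have "\<dots> = k * (\<Sum>u\<in>color_class V c i. card (closed_nbhd V E u))"
    using sum_card_color_closed_nbhd[OF simple_graph_finite[OF graph]]
    by (simp add: sum_distrib_left[symmetric])
  also have "\<dots> = k * card (color_class V c i) * (r + 1)"
    using card_closed_nbhd[OF graph reg] by (simp add: color_class_def algebra_simps)
  finally show ?thesis
    by (metis mult_right_cancel add_is_0 one_neq_zero)
qed

lemma degree_into_own_class:
  assumes "i \<in> {1..k}" "x \<in> color_class V c i"
  shows "k * card {y \<in> color_class V c i. {x, y} \<in> E} + k = r + 1"
proof -
  have x: "x \<in> V" "c x = i"
    using assms(2) unfolding color_class_def by auto
  show ?thesis
    using cnb_coloring_card_color[OF simple_graph_finite[OF graph] col x(1) assms(1)]
      card_color_closed_nbhd[OF graph x(1)] card_closed_nbhd[OF graph reg x(1)] x(2)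
    by simp
qed

lemma degree_into_other_class:
  assumes "j \<in> {1..k}" "i \<noteq> j" "x \<in> color_class V c i"
  shows "k * card {y \<in> color_class V c j. {x, y} \<in> E} = r + 1"
proof -
  have x: "x \<in> V" "c x = i"
    using assms(3) unfolding color_class_def by auto
  show ?thesis
    using cnb_coloring_card_color[OF simple_graph_finite[OF graph] col x(1) assms(1)]
      card_color_closed_nbhd[OF graph x(1)] card_closed_nbhd[OF graph reg x(1)] x(2) assms(2)
    by simp
qed

lemma card_edges_within_color_class:
  assumes "i \<in> {1..k}"
  shows "2 * k^2 * card (edges_between E (color_class V c i) (color_class V c i)) + k * card V
           = (r + 1) * card V"
proof -
  let ?C = "color_class V c i"
  have "finite ?C"
    using simple_graph_finite[OF graph] unfolding color_class_def by simp
  have "k * (2 * card (edges_between E ?C ?C)) + k * card ?C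
          = (\<Sum>x\<in>?C. k * card {y \<in> ?C. {x, y} \<in> E} + k)"
    using card_edges_between_self[OF \<open>finite ?C\<close>] simple_graph_card_edge[OF graph]
    by (simp add: sum.distrib sum_distrib_left)
  also have "\<dots> = card ?C * (r + 1)"
    using degree_into_own_class[OF assms] by simp
  finally show ?thesis
    using card_color_class[OF assms]
    by (metis add_mult_distrib2 mult.assoc mult.commute power2_eq_square)
qed

lemma card_edges_between_color_classes:
  assumes "i \<in> {1..k}" "j \<in> {1..k}" "i \<noteq> j"
  shows "k^2 * card (edges_between E (color_class V c i) (color_class V c j)) = (r + 1) * card V"
proof -
  have finite: "finite (color_class V c l)" for l
    using simple_graph_finite[OF graph] unfolding color_class_def by simp
  have "color_class V c i \<inter> color_class V c j = {}"
    using assms(3) unfolding color_class_def by auto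
  then have "k * card (edges_between E (color_class V c i) (color_class V c j))
               = (\<Sum>x\<in>color_class V c i. k * card {y \<in> color_class V c j. {x, y} \<in> E})"
    by (simp add: card_edges_between_disjoint[OF finite finite] sum_distrib_left)
  also have "\<dots> = card (color_class V c i) * (r + 1)"
    using degree_into_other_class[OF assms(2,3)] by simp
  finally show ?thesis
    using card_color_class[OF assms(1)] by (metis mult.assoc mult.commute power2_eq_square)
qed

end

theorem theorem2p10:
  fixes V :: "'a set" and E :: "'a set set" and r k :: nat and c :: "'a \<Rightarrow> nat"
  assumes "simple_graph V E"
    and "regular V E r"
    and "k \<ge> 2"
    and "cnb_coloring V E k c"
  shows "(\<forall>i\<in>{1..k}. real (card (color_class V c i)) = real (card V) / real k
            \<and> real (card (edges_between E (color_class V c i) (color_class V c i)))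
                = (real r + 1 - real k) * real (card V) / (2 * (real k)^2))
       \<and> (\<forall>i\<in>{1..k}. \<forall>j\<in>{1..k}. i \<noteq> j \<longrightarrow>
            real (card (edges_between E (color_class V c i) (color_class V c j)))
              = (real r + 1) * real (card V) / (real k)^2)"
proof -
  have "real k > 0"
    using assms(3) by simp
  note setting = assms(1,2,4)
  show ?thesis
  proof (intro conjI ballI impI)
    fix i assume i: "i \<in> {1..k}"
    show "real (card (color_class V c i)) = real (card V) / real k"
      using arg_cong[OF card_color_class[OF setting i], where f = real] \<open>real k > 0\<close>
      by (simp add: field_simps)
    show "real (card (edges_between E (color_class V c i) (color_class V c i)))
            = (real r + 1 - real k) * real (card V) / (2 * (real k)^2)"
      using arg_cong[OF card_edges_within_color_class[OF setting i], where f = real] \<open>real k > 0\<close>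
      by (simp add: field_simps)
  next
    fix i j assume "i \<in> {1..k}" "j \<in> {1..k}" "i \<noteq> j"
    then show "real (card (edges_between E (color_class V c i) (color_class V c j)))
                 = (real r + 1) * real (card V) / (real k)^2"
      using arg_cong[OF card_edges_between_color_classes[OF setting], where f = real] \<open>real k > 0\<close>
      by (simp add: field_simps)
  qed
qed

end
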